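(* Let $m<M$ be real numbers and let $X$ be a random variable taking values in $[m,M]$, either discrete (taking finitely many values $x_1,\dots,x_n\in[m,M]$ with probabilities $p_1,\dots,p_n$) or continuous (with probability density $f$ on $[m,M]$). Let $\mu_1'$ be its mean and $\mu_2,\mu_3,\mu_4$ its second, third and fourth central moments, and assume $\mu_2\neq(\mu_1'-m)(M-\mu_1')$. Then $$\mu_2\mu_4-\mu_2^3-\mu_3^2\le \frac{\big((\mu_1'-m)(M-\mu_1')(M-m)\big)^2}{27}\le\frac{(M-m)^6}{432}.$$
   Context: The mean is $\mu_1'=\sum_{i=1}^n p_i x_i$ (discrete case) or $\mu_1'=\int_m^M x f(x)\,dx$ (continuous case), where $\sum p_i=1$, resp. $\int_m^M f(x)\,dx=1$. The $r$-th central moment is $\mu_r=\sum_{i=1}^n p_i (x_i-\mu_1')^r$, resp. $\mu_r=\int_m^M (x-\mu_1')^r f(x)\,dx$. *)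

theory Defs
  imports "HOL-Analysis.Analysis"
begin

definition disc_mean :: "nat \<Rightarrow> (nat \<Rightarrow> real) \<Rightarrow> (nat \<Rightarrow> real) \<Rightarrow> real" where
  "disc_mean n p x = (\<Sum>i<n. p i * x i)"

definition disc_cmoment :: "nat \<Rightarrow> (nat \<Rightarrow> real) \<Rightarrow> (nat \<Rightarrow> real) \<Rightarrow> nat \<Rightarrow> real" where
  "disc_cmoment n p x r = (\<Sum>i<n. p i * (x i - disc_mean n p x) ^ r)"

definition cont_mean :: "real \<Rightarrow> real \<Rightarrow> (real \<Rightarrow> real) \<Rightarrow> real" where
  "cont_mean m M f = integral {m..M} (\<lambda>t. t * f t)"

definition cont_cmoment :: "real \<Rightarrow> real \<Rightarrow> (real \<Rightarrow> real) \<Rightarrow> nat \<Rightarrow> real" where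
  "cont_cmoment m M f r = integral {m..M} (\<lambda>t. (t - cont_mean m M f) ^ r * f t)"

end

theory Submission
  imports Defs
begin

text \<open>Write \<open>y = X - \<mu>\<^sub>1'\<close>, \<open>a = \<mu>\<^sub>1' - m\<close>, \<open>b = M - \<mu>\<^sub>1'\<close>. The quartic \<open>(y + a)(b - y)(\<nu>y - \<kappa>)\<^sup>2\<close> is
  nonnegative on \<open>[m, M]\<close>, so its expectation \<open>s\<kappa>\<^sup>2 - 2k\<kappa>\<nu> + r\<nu>\<^sup>2\<close> is too, where
  \<open>s = ab - \<mu>\<^sub>2 > 0\<close>, \<open>k = (b - a)\<mu>\<^sub>2 - \<mu>\<^sub>3\<close>, \<open>r = ab\<mu>\<^sub>2 + (b - a)\<mu>\<^sub>3 - \<mu>\<^sub>4\<close>; hence \<open>k\<^sup>2 \<le> sr\<close>.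
  This bounds \<open>\<mu>\<^sub>4\<close> from above, and after completing a square in \<open>\<mu>\<^sub>3\<close> one is left with
  \<open>4ab(\<mu>\<^sub>2\<mu>\<^sub>4 - \<mu>\<^sub>2\<^sup>3 - \<mu>\<^sub>3\<^sup>2) \<le> \<mu>\<^sub>2\<^sup>2 (ab - \<mu>\<^sub>2)(a + b)\<^sup>2\<close>; AM-GM gives
  \<open>27\<mu>\<^sub>2\<^sup>2(ab - \<mu>\<^sub>2) \<le> 4(ab)\<^sup>3\<close>.\<close>

text \<open>Total mass 1 and vanishing first central moment are built in: the coefficients
  \<open>a0\<close> and \<open>a1\<close> are paired with the moments \<open>1\<close> and \<open>0\<close>.\<close>

definition positive_quartic_moments :: "real \<Rightarrow> real \<Rightarrow> real \<Rightarrow> real \<Rightarrow> real \<Rightarrow> real \<Rightarrow> bool" where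
  "positive_quartic_moments m M u \<mu>2 \<mu>3 \<mu>4 \<longleftrightarrow>
     (\<forall>a0 a1 a2 a3 a4.
        (\<forall>t\<in>{m..M}. 0 \<le> a0 + a1*(t-u) + a2*(t-u)^2 + a3*(t-u)^3 + a4*(t-u)^4)
        \<longrightarrow> 0 \<le> a0 + a2*\<mu>2 + a3*\<mu>3 + a4*\<mu>4)"

lemma positive_quartic_momentsD:
  assumes "positive_quartic_moments m M u \<mu>2 \<mu>3 \<mu>4"
    and "\<And>t. t \<in> {m..M} \<Longrightarrow> a0 + a1*(t-u) + a2*(t-u)^2 + a3*(t-u)^3 + a4*(t-u)^4 = q t"
    and "\<And>t. t \<in> {m..M} \<Longrightarrow> 0 \<le> q t"
  shows "0 \<le> a0 + a2*\<mu>2 + a3*\<mu>3 + a4*\<mu>4"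
  using assms unfolding positive_quartic_moments_def by metis

lemma positive_quartic_moments_disc:
  assumes "\<forall>i<n. x i \<in> {m..M} \<and> p i \<ge> 0" and "(\<Sum>i<n. p i) = 1"
  shows "positive_quartic_moments m M (disc_mean n p x)
           (disc_cmoment n p x 2) (disc_cmoment n p x 3) (disc_cmoment n p x 4)"
  unfolding positive_quartic_moments_def
proof (intro allI impI)
  fix a0 a1 a2 a3 a4 :: real
  define u where "u = disc_mean n p x"
  assume "\<forall>t\<in>{m..M}. 0 \<le> a0 + a1*(t - disc_mean n p x) + a2*(t - disc_mean n p x)^2
            + a3*(t - disc_mean n p x)^3 + a4*(t - disc_mean n p x)^4"
  then have q_nonneg: "\<forall>t\<in>{m..M}. 0 \<le> a0 + a1*(t-u) + a2*(t-u)^2 + a3*(t-u)^3 + a4*(t-u)^4"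
    by (simp add: u_def)
  have "(\<Sum>i<n. p i * (x i - u)) = (\<Sum>i<n. p i * x i) - u * (\<Sum>i<n. p i)"
    by (simp add: algebra_simps sum_subtractf sum_distrib_left)
  then have first_central: "(\<Sum>i<n. p i * (x i - u)) = 0"
    using assms(2) by (simp add: u_def disc_mean_def)
  have "0 \<le> (\<Sum>i<n. p i * (a0 + a1*(x i-u) + a2*(x i-u)^2 + a3*(x i-u)^3 + a4*(x i-u)^4))"
    using assms(1) q_nonneg by (intro sum_nonneg mult_nonneg_nonneg) auto
  also have "\<dots> = (\<Sum>i<n. a0 * p i + a1 * (p i * (x i - u)) + a2 * (p i * (x i - u)^2)
       + a3 * (p i * (x i - u)^3) + a4 * (p i * (x i - u)^4))"
    by (simp add: algebra_simps)
  also have "\<dots> = a0 * (\<Sum>i<n. p i) + a1 * (\<Sum>i<n. p i * (x i - u))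
      + a2 * (\<Sum>i<n. p i * (x i - u)^2) + a3 * (\<Sum>i<n. p i * (x i - u)^3)
      + a4 * (\<Sum>i<n. p i * (x i - u)^4)"
    by (simp add: sum.distrib sum_distrib_left)
  finally show "0 \<le> a0 + a2 * disc_cmoment n p x 2 + a3 * disc_cmoment n p x 3
      + a4 * disc_cmoment n p x 4"
    using first_central assms(2) by (simp add: disc_cmoment_def u_def)
qed

lemma integrable_continuous_mult_nonneg:
  fixes f g :: "real \<Rightarrow> real"
  assumes "f integrable_on {m..M}" and "\<forall>t\<in>{m..M}. f t \<ge> 0" and "continuous_on UNIV g"
  shows "(\<lambda>t. g t * f t) integrable_on {m..M}"
proof -
  have "f absolutely_integrable_on {m..M}"
    using nonnegative_absolutely_integrable_1 assms(1,2) by blast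
  moreover have "g \<in> borel_measurable (lebesgue_on {m..M})"
    using assms(3) by (intro continuous_imp_measurable_on_sets_lebesgue) (auto intro: continuous_on_subset)
  moreover have "bounded (g ` {m..M})"
    using assms(3) by (intro compact_imp_bounded compact_continuous_image) (auto intro: continuous_on_subset)
  ultimately show ?thesis
    using absolutely_integrable_bounded_measurable_product_real
    by (simp add: absolutely_integrable_on_def)
qed

lemma positive_quartic_moments_cont:
  fixes f :: "real \<Rightarrow> real"
  assumes f: "f integrable_on {m..M}" and f_nonneg: "\<forall>t\<in>{m..M}. f t \<ge> 0"
    and f_mass: "integral {m..M} f = 1"
  shows "positive_quartic_moments m M (cont_mean m M f)
           (cont_cmoment m M f 2) (cont_cmoment m M f 3) (cont_cmoment m M f 4)"
  unfolding positive_quartic_moments_def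
proof (intro allI impI)
  fix a0 a1 a2 a3 a4 :: real
  define u where "u = cont_mean m M f"
  assume "\<forall>t\<in>{m..M}. 0 \<le> a0 + a1*(t - cont_mean m M f) + a2*(t - cont_mean m M f)^2
            + a3*(t - cont_mean m M f)^3 + a4*(t - cont_mean m M f)^4"
  then have q_nonneg: "\<forall>t\<in>{m..M}. 0 \<le> a0 + a1*(t-u) + a2*(t-u)^2 + a3*(t-u)^3 + a4*(t-u)^4"
    by (simp add: u_def)
  have int: "\<And>g. continuous_on UNIV g \<Longrightarrow> (\<lambda>t. g t * f t) integrable_on {m..M}"
    using integrable_continuous_mult_nonneg[OF f f_nonneg] by blast
  have int_pow: "\<And>c (k::nat). (\<lambda>t. c * ((t - u)^k * f t)) integrable_on {m..M}"
  proof -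
    fix c and k :: nat
    have "(\<lambda>t. (t - u)^k * f t) integrable_on {m..M}"
      by (rule int) (intro continuous_intros)
    then show "(\<lambda>t. c * ((t - u)^k * f t)) integrable_on {m..M}"
      using integrable_cmul by force
  qed
  have int_lin: "\<And>c. (\<lambda>t. c * ((t - u) * f t)) integrable_on {m..M}"
    using int_pow[where k=1] by simp
  have int_const: "\<And>c. (\<lambda>t. c * f t) integrable_on {m..M}"
    using integrable_cmul[OF f] by simp
  have first_central: "integral {m..M} (\<lambda>t. (t - u) * f t) = 0"
  proof -
    have "integral {m..M} (\<lambda>t. (t - u) * f t) = integral {m..M} (\<lambda>t. t * f t - u * f t)"
      by (simp add: algebra_simps)
    also have "\<dots> = integral {m..M} (\<lambda>t. t * f t) - u * integral {m..M} f"
      using int_const by (simp add: integral_diff int continuous_on_id)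
    finally show ?thesis
      using f_mass by (simp add: u_def cont_mean_def)
  qed
  have "0 \<le> integral {m..M} (\<lambda>t. (a0 + a1*(t-u) + a2*(t-u)^2 + a3*(t-u)^3 + a4*(t-u)^4) * f t)"
    using q_nonneg f_nonneg by (intro integral_nonneg int continuous_intros) auto
  also have "\<dots> = integral {m..M} (\<lambda>t. a0 * f t + a1 * ((t - u) * f t) + a2 * ((t - u)^2 * f t)
       + a3 * ((t - u)^3 * f t) + a4 * ((t - u)^4 * f t))"
    by (simp add: algebra_simps)
  also have "\<dots> = a0 * integral {m..M} f + a1 * integral {m..M} (\<lambda>t. (t - u) * f t)
      + a2 * integral {m..M} (\<lambda>t. (t - u)^2 * f t) + a3 * integral {m..M} (\<lambda>t. (t - u)^3 * f t)
      + a4 * integral {m..M} (\<lambda>t. (t - u)^4 * f t)"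
    by (simp add: integral_add integrable_add int_const int_lin int_pow)
  finally show "0 \<le> a0 + a2 * cont_cmoment m M f 2 + a3 * cont_cmoment m M f 3
      + a4 * cont_cmoment m M f 4"
    using first_central f_mass by (simp add: cont_cmoment_def u_def)
qed

lemma positive_quartic_moments_mean_variance:
  assumes "positive_quartic_moments m M u \<mu>2 \<mu>3 \<mu>4"
  shows "m \<le> u" "u \<le> M" "0 \<le> \<mu>2" "\<mu>2 \<le> (u - m) * (M - u)"
proof -
  show "m \<le> u"
    using positive_quartic_momentsD[OF assms, of "u - m" 1 0 0 0 "\<lambda>t. t - m"] by auto
  show "u \<le> M"
    using positive_quartic_momentsD[OF assms, of "M - u" "-1" 0 0 0 "\<lambda>t. M - t"] by auto
  show "0 \<le> \<mu>2"
    using positive_quartic_momentsD[OF assms, of 0 0 1 0 0 "\<lambda>t. (t - u)^2"] by auto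
  have "0 \<le> (u - m) * (M - u) + (-1)*\<mu>2 + 0*\<mu>3 + 0*\<mu>4"
    by (rule positive_quartic_momentsD[OF assms, of "(u - m) * (M - u)" "M + m - 2*u" "-1" 0 0 "\<lambda>t. (t - m) * (M - t)"])
      (simp add: algebra_simps power2_eq_square, simp)
  then show "\<mu>2 \<le> (u - m) * (M - u)" by simp
qed

text \<open>Expectation of \<open>(t - m)(M - t)(\<nu>(t - u) - \<kappa>)\<^sup>2\<close>.\<close>

lemma positive_quartic_moments_localizing_form:
  assumes "positive_quartic_moments m M u \<mu>2 \<mu>3 \<mu>4"
  defines "P \<equiv> (u - m) * (M - u)" and "c \<equiv> M + m - 2*u"
  shows "0 \<le> (P - \<mu>2)*\<kappa>^2 - 2*(c*\<mu>2 - \<mu>3)*\<kappa>*\<nu> + (P*\<mu>2 + c*\<mu>3 - \<mu>4)*\<nu>^2"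
proof -
  have "0 \<le> P*\<kappa>^2 + (P*\<nu>^2 - 2*c*\<nu>*\<kappa> - \<kappa>^2)*\<mu>2 + (c*\<nu>^2 + 2*\<nu>*\<kappa>)*\<mu>3 + (- (\<nu>^2))*\<mu>4"
  proof (rule positive_quartic_momentsD[OF assms(1), of _ "c*\<kappa>^2 - 2*P*\<nu>*\<kappa>"])
    fix t assume "t \<in> {m..M}"
    then show "0 \<le> (t - m) * (M - t) * (\<nu>*(t - u) - \<kappa>)^2" by simp
  qed (simp add: P_def c_def algebra_simps power2_eq_square power3_eq_cube power4_eq_xxxx)
  then show ?thesis by (simp add: algebra_simps)
qed

lemma amgm_square_times_gap:
  fixes w P :: real
  assumes "0 \<le> w" "w \<le> P"
  shows "27 * (w^2 * (P - w)) \<le> 4 * P^3"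
proof -
  have "4 * P^3 - 27 * (w^2 * (P - w)) = (3*w - 2*P)^2 * (3*w + P)"
    by (simp add: algebra_simps power2_eq_square power3_eq_cube)
  also have "\<dots> \<ge> 0" using assms by simp
  finally show ?thesis by simp
qed

lemma hankel_determinant_le:
  fixes a b \<mu>2 \<mu>3 \<mu>4 :: real
  defines "P \<equiv> a * b" and "c \<equiv> b - a"
  assumes \<mu>2_nonneg: "0 \<le> \<mu>2" and gap: "\<mu>2 < P"
    and localizing: "(c*\<mu>2 - \<mu>3)^2 \<le> (P - \<mu>2) * (P*\<mu>2 + c*\<mu>3 - \<mu>4)"
  shows "\<mu>2*\<mu>4 - \<mu>2^3 - \<mu>3^2 \<le> (P * (a + b))^2 / 27"
proof -
  define s where "s = P - \<mu>2"
  define D where "D = \<mu>2*\<mu>4 - \<mu>2^3 - \<mu>3^2"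
  define R where "R = \<mu>2 * (s*(P*\<mu>2 + c*\<mu>3) - (c*\<mu>2 - \<mu>3)^2) - s*\<mu>2^3 - s*\<mu>3^2"
  have s_pos: "0 < s" and P_pos: "0 < P"
    using gap \<mu>2_nonneg by (auto simp: s_def)
  have "s * D \<le> R"
  proof -
    have "\<mu>2 * (s*\<mu>4) \<le> \<mu>2 * (s*(P*\<mu>2 + c*\<mu>3) - (c*\<mu>2 - \<mu>3)^2)"
      using localizing \<mu>2_nonneg by (intro mult_left_mono) (simp_all add: s_def algebra_simps)
    then show ?thesis by (simp add: D_def R_def algebra_simps)
  qed
  have complete_square:
    "4*P*R = \<mu>2^2 * s^2 * (4*P + c^2) - (2*P*\<mu>3 - c*\<mu>2*(s + 2*\<mu>2))^2"
    by (simp add: R_def s_def algebra_simps power2_eq_square power3_eq_cube)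
  have "4*P + c^2 = (a + b)^2"
    by (simp add: P_def c_def algebra_simps power2_eq_square)
  with complete_square have square_bound: "4*P*R = \<mu>2^2 * s^2 * (a + b)^2 - (2*P*\<mu>3 - c*\<mu>2*(s + 2*\<mu>2))^2"
    by simp
  have "s * (4*P*D) = 4*P * (s*D)"
    by (simp add: mult_ac)
  also have "\<dots> \<le> 4*P*R"
    using \<open>s * D \<le> R\<close> P_pos by simp
  also have "\<dots> \<le> \<mu>2^2 * s^2 * (a + b)^2"
    using square_bound by simp
  also have "\<dots> = s * (\<mu>2^2 * s * (a + b)^2)"
    by (simp add: power2_eq_square mult_ac)
  finally have "s * (4*P*D) \<le> s * (\<mu>2^2 * s * (a + b)^2)" .
  then have "27*(4*P*D) \<le> 27*(\<mu>2^2 * s) * (a + b)^2"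
    using s_pos by (simp add: mult_ac)
  also have "\<dots> \<le> 4*P^3 * (a + b)^2"
    using amgm_square_times_gap[of \<mu>2 P] \<mu>2_nonneg gap
    by (intro mult_right_mono) (simp_all add: s_def)
  finally have "(4*P) * (27*D) \<le> (4*P) * (P^2 * (a + b)^2)"
    by (simp add: power3_eq_cube power2_eq_square mult_ac)
  then have "27*D \<le> (P * (a + b))^2"
    using P_pos by (simp add: power_mult_distrib)
  then show ?thesis by (simp add: D_def)
qed

lemma product_sum_sq_le:
  fixes a b :: real
  assumes "0 \<le> a" "0 \<le> b"
  shows "(a * b * (a + b))^2 / 27 \<le> (a + b)^6 / 432"
proof -
  have "4 * (a * b) \<le> (a + b)^2"
    using sum_squares_ge_zero[of "a - b" 0] by (simp add: algebra_simps power2_eq_square)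
  then have "(4 * (a * b))^2 * (a + b)^2 \<le> ((a + b)^2)^2 * (a + b)^2"
    using assms by (intro mult_right_mono power_mono) simp_all
  then show ?thesis
    by (simp add: power_mult_distrib flip: power_mult power_add)
qed

lemma positive_quartic_moments_central_bound:
  assumes moments: "positive_quartic_moments m M u \<mu>2 \<mu>3 \<mu>4"
    and not_extremal: "\<mu>2 \<noteq> (u - m) * (M - u)"
  shows "\<mu>2*\<mu>4 - \<mu>2^3 - \<mu>3^2 \<le> ((u - m) * (M - u) * (M - m))^2 / 27 \<and>
         ((u - m) * (M - u) * (M - m))^2 / 27 \<le> (M - m)^6 / 432"
proof
  note bounds = positive_quartic_moments_mean_variance[OF moments]
  let ?a = "u - m" and ?b = "M - u"
  have gap: "\<mu>2 < ?a * ?b" using bounds not_extremal by simp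
  have "((?b - ?a)*\<mu>2 - \<mu>3)^2 \<le> (?a*?b - \<mu>2) * (?a*?b*\<mu>2 + (?b - ?a)*\<mu>3 - \<mu>4)"
  proof -
    let ?s = "?a*?b - \<mu>2" and ?k = "(?b - ?a)*\<mu>2 - \<mu>3"
    have "0 \<le> ?s * (?s * (?a*?b*\<mu>2 + (?b - ?a)*\<mu>3 - \<mu>4) - ?k^2)"
      using positive_quartic_moments_localizing_form[OF moments, of ?k ?s]
      by (simp add: algebra_simps power2_eq_square)
    then show ?thesis
      using gap by (simp add: zero_le_mult_iff)
  qed
  then show "\<mu>2*\<mu>4 - \<mu>2^3 - \<mu>3^2 \<le> ((u - m) * (M - u) * (M - m))^2 / 27"
    using hankel_determinant_le[of \<mu>2 ?a ?b \<mu>3 \<mu>4] bounds gap by simp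
  show "((u - m) * (M - u) * (M - m))^2 / 27 \<le> (M - m)^6 / 432"
    using product_sum_sq_le[of ?a ?b] bounds by simp
qed

theorem corollary2p3:
  fixes m M :: real
  assumes "m < M"
  shows
   "(\<forall>(n::nat) (p::nat \<Rightarrow> real) (x::nat \<Rightarrow> real).
       (\<forall>i<n. x i \<in> {m..M} \<and> p i \<ge> 0) \<and> (\<Sum>i<n. p i) = 1 \<and>
       disc_cmoment n p x 2 \<noteq> (disc_mean n p x - m) * (M - disc_mean n p x) \<longrightarrow>
       disc_cmoment n p x 2 * disc_cmoment n p x 4 - disc_cmoment n p x 2 ^ 3
         - disc_cmoment n p x 3 ^ 2
         \<le> ((disc_mean n p x - m) * (M - disc_mean n p x) * (M - m)) ^ 2 / 27 \<and>
       ((disc_mean n p x - m) * (M - disc_mean n p x) * (M - m)) ^ 2 / 27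
         \<le> (M - m) ^ 6 / 432)
  \<and>
   (\<forall>f::real \<Rightarrow> real.
       f integrable_on {m..M} \<and> (\<forall>t\<in>{m..M}. f t \<ge> 0) \<and> integral {m..M} f = 1 \<and>
       cont_cmoment m M f 2 \<noteq> (cont_mean m M f - m) * (M - cont_mean m M f) \<longrightarrow>
       cont_cmoment m M f 2 * cont_cmoment m M f 4 - cont_cmoment m M f 2 ^ 3
         - cont_cmoment m M f 3 ^ 2
         \<le> ((cont_mean m M f - m) * (M - cont_mean m M f) * (M - m)) ^ 2 / 27 \<and>
       ((cont_mean m M f - m) * (M - cont_mean m M f) * (M - m)) ^ 2 / 27
         \<le> (M - m) ^ 6 / 432)"
  by (intro conjI allI impI positive_quartic_moments_central_bound)
    (auto intro: positive_quartic_moments_disc positive_quartic_moments_cont)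

end
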